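(* Fix an integer $k\geq1$ and $V=\{0,\ldots,k\}$. Let $\varphi$ be a Boolean function on $V$ all of whose satisfying valuations have even size. Then there exists a Boolean function $\check\varphi$ on $V$ in canonical form such that $\check\varphi\simeq\varphi$.
   Context: A valuation is a subset $\nu\subseteq V$; $\nu^{(l)}$ is $\nu$ with membership of $l$ flipped. A Boolean function on $V$ is a map $\varphi:2^V\to\{\text{false},\text{true}\}$; $\mathrm{sat}(\varphi)$ is its set of satisfying valuations. $\varphi$ is in canonical form if (1) all its satisfying valuations have even size, and (2) there are no two valuations $\nu,\nu'$ of even size with $|\nu'|<|\nu|$, $\nu\in\mathrm{sat}(\varphi)$ and $\nu'\notin\mathrm{sat}(\varphi)$. Write $\varphi\xrightarrow{+(\nu,l)}\varphi'$ if $\nu,\nu^{(l)}\notin\mathrm{sat}(\varphi)$ and $\mathrm{sat}(\varphi')=\mathrm{sat}(\varphi)\cup\{\nu,\nu^{(l)}\}$, and $\varphi\xrightarrow{-(\nu,l)}\varphi'$ if $\varphi'\xrightarrow{+(\nu,l)}\varphi$. Write $\varphi\xrightarrow{\pm}\varphi'$ if one of these holds for some $\nu,l$; $\simeq$ is the reflexive-transitive closure of $\xrightarrow{\pm}$ (an equivalence relation). *)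

theory Defs
  imports Main
begin

text \<open>A valuation is a subset of V. A Boolean function on V is
  represented as a predicate on nat sets that is false outside Pow V, so it is determined
  by its set of satisfying valuations.\<close>

definition boolfun_on :: "nat set \<Rightarrow> (nat set \<Rightarrow> bool) \<Rightarrow> bool" where
  "boolfun_on V \<phi> \<longleftrightarrow> (\<forall>\<nu>. \<phi> \<nu> \<longrightarrow> \<nu> \<subseteq> V)"

definition sat :: "(nat set \<Rightarrow> bool) \<Rightarrow> nat set set" where
  "sat \<phi> = {\<nu>. \<phi> \<nu>}"

definition flip :: "nat set \<Rightarrow> nat \<Rightarrow> nat set" where
  "flip \<nu> l = (if l \<in> \<nu> then \<nu> - {l} else insert l \<nu>)"

definition canonical :: "nat set \<Rightarrow> (nat set \<Rightarrow> bool) \<Rightarrow> bool" where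
  "canonical V \<phi> \<longleftrightarrow>
     (\<forall>\<nu>\<in>sat \<phi>. even (card \<nu>)) \<and>
     \<not> (\<exists>\<nu> \<nu>'. \<nu> \<subseteq> V \<and> \<nu>' \<subseteq> V \<and> even (card \<nu>) \<and> even (card \<nu>') \<and>
            card \<nu>' < card \<nu> \<and> \<nu> \<in> sat \<phi> \<and> \<nu>' \<notin> sat \<phi>)"

definition add_step :: "nat set \<Rightarrow> (nat set \<Rightarrow> bool) \<Rightarrow> nat set \<Rightarrow> nat \<Rightarrow> (nat set \<Rightarrow> bool) \<Rightarrow> bool" where
  "add_step V \<phi> \<nu> l \<phi>' \<longleftrightarrow> \<nu> \<subseteq> V \<and> l \<in> V \<and>
     \<nu> \<notin> sat \<phi> \<and> flip \<nu> l \<notin> sat \<phi> \<and> sat \<phi>' = sat \<phi> \<union> {\<nu>, flip \<nu> l}"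

definition pm_step :: "nat set \<Rightarrow> (nat set \<Rightarrow> bool) \<Rightarrow> (nat set \<Rightarrow> bool) \<Rightarrow> bool" where
  "pm_step V \<phi> \<phi>' \<longleftrightarrow> boolfun_on V \<phi> \<and> boolfun_on V \<phi>' \<and>
     (\<exists>\<nu> l. add_step V \<phi> \<nu> l \<phi>' \<or> add_step V \<phi>' \<nu> l \<phi>)"

definition equiv_bf :: "nat set \<Rightarrow> (nat set \<Rightarrow> bool) \<Rightarrow> (nat set \<Rightarrow> bool) \<Rightarrow> bool" where
  "equiv_bf V = (pm_step V)\<^sup>*\<^sup>*"

end

theory Submission
  imports Defs
begin

text \<open>Within the even valuations, \<open>\<simeq>\<close> can replace any satisfying valuation \<open>a\<close> by any
  non-satisfying one \<open>b\<close>. If \<open>b\<close> arises from \<open>a\<close> by flipping \<open>l\<^sub>1\<close> and then \<open>l\<^sub>2\<close>, the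
  intermediate valuation \<open>w\<close> has odd size and so is never satisfying: add \<open>{b, w}\<close>, then
  remove \<open>{a, w}\<close>. In general one walks from \<open>a\<close> to \<open>b\<close> by such double flips, each shrinking
  the symmetric difference, first relocating any satisfying valuation met on the way.
  Hence any two sets of even valuations of equal cardinality are equivalent, and a canonical
  function is obtained by choosing as many even valuations as \<open>\<phi>\<close> satisfies, smallest first.\<close>

definition boolfun_of :: "nat set set \<Rightarrow> nat set \<Rightarrow> bool" where
  "boolfun_of S = (\<lambda>\<nu>. \<nu> \<in> S)"

definition even_valuations :: "nat set \<Rightarrow> nat set set" where
  "even_valuations V = {\<nu>. \<nu> \<subseteq> V \<and> even (card \<nu>)}"

lemma sat_boolfun_of [simp]: "sat (boolfun_of S) = S"
  by (simp add: sat_def boolfun_of_def)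

lemma boolfun_of_sat [simp]: "boolfun_of (sat \<phi>) = \<phi>"
  by (simp add: sat_def boolfun_of_def)

lemma boolfun_on_boolfun_of: "S \<subseteq> Pow V \<Longrightarrow> boolfun_on V (boolfun_of S)"
  by (auto simp: boolfun_on_def boolfun_of_def)

lemma finite_even_valuations: "finite V \<Longrightarrow> finite (even_valuations V)"
  by (simp add: even_valuations_def finite_Collect_subsets)

lemma equiv_bf_trans: "equiv_bf V \<phi> \<psi> \<Longrightarrow> equiv_bf V \<psi> \<chi> \<Longrightarrow> equiv_bf V \<phi> \<chi>"
  unfolding equiv_bf_def by (rule rtranclp_trans)

lemma flip_flip [simp]: "flip (flip \<nu> l) l = \<nu>"
  by (auto simp: flip_def)

lemma flip_subset: "\<nu> \<subseteq> V \<Longrightarrow> l \<in> V \<Longrightarrow> flip \<nu> l \<subseteq> V"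
  by (auto simp: flip_def)

lemma even_card_flip_iff: "even (card (flip \<nu> l)) \<longleftrightarrow> odd (card \<nu>)" if "finite \<nu>"
proof (cases "l \<in> \<nu>")
  case True
  then have "card \<nu> = Suc (card (\<nu> - {l}))" using that by (metis card_Suc_Diff1)
  then show ?thesis using True by (simp add: flip_def)
qed (use that in \<open>simp add: flip_def\<close>)

lemma odd_card_flip:
  assumes "finite V" "\<nu> \<in> even_valuations V" "l \<in> V"
  shows "flip \<nu> l \<subseteq> V" "odd (card (flip \<nu> l))"
  using assms flip_subset[of \<nu> V l] even_card_flip_iff[of \<nu> l] finite_subset
  by (auto simp: even_valuations_def)

lemma flip_flip_in_even_valuations:
  assumes "finite V" "\<nu> \<in> even_valuations V" "l\<^sub>1 \<in> V" "l\<^sub>2 \<in> V"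
  shows "flip (flip \<nu> l\<^sub>1) l\<^sub>2 \<in> even_valuations V"
  using odd_card_flip[OF assms(1-3)] flip_subset[of "flip \<nu> l\<^sub>1" V l\<^sub>2] assms(4)
    even_card_flip_iff[of "flip \<nu> l\<^sub>1" l\<^sub>2] finite_subset[OF _ assms(1)]
  by (auto simp: even_valuations_def)

lemma equiv_bf_replace_two_flips:
  assumes V: "finite V" and S: "S \<subseteq> even_valuations V"
    and a: "a \<in> S" and b: "b \<in> even_valuations V" "b \<notin> S"
    and l: "l\<^sub>1 \<in> V" "l\<^sub>2 \<in> V" and ab: "b = flip (flip a l\<^sub>1) l\<^sub>2"
  shows "equiv_bf V (boolfun_of S) (boolfun_of (insert b (S - {a})))"
proof -
  define w where "w = flip a l\<^sub>1"
  have aE: "a \<in> even_valuations V" using a S by auto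
  have w: "w \<subseteq> V" "odd (card w)" using odd_card_flip[OF V aE l(1)] by (auto simp: w_def)
  then have "w \<notin> S" "w \<noteq> a" "w \<noteq> b" using S aE b by (auto simp: even_valuations_def)
  have "a \<notin> insert b (S - {a})" using a b by auto
  have SV: "S \<subseteq> Pow V" "a \<subseteq> V" "b \<subseteq> V"
    using S aE b by (auto simp: even_valuations_def)
  define M where "M = S \<union> {b, w}"
  have MV: "M \<subseteq> Pow V" "insert b (S - {a}) \<subseteq> Pow V" using SV w by (auto simp: M_def)
  have "add_step V (boolfun_of S) b l\<^sub>2 (boolfun_of M)"
    unfolding add_step_def using SV l b \<open>w \<notin> S\<close> by (simp add: M_def ab w_def)
  moreover have "add_step V (boolfun_of (insert b (S - {a}))) a l\<^sub>1 (boolfun_of M)"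
    unfolding add_step_def using SV l a \<open>w \<notin> S\<close> \<open>w \<noteq> b\<close> \<open>a \<notin> insert b (S - {a})\<close>
    by (auto simp: M_def w_def)
  ultimately have "pm_step V (boolfun_of S) (boolfun_of M)"
    and "pm_step V (boolfun_of M) (boolfun_of (insert b (S - {a})))"
    using SV(1) MV by (auto simp: pm_step_def intro: boolfun_on_boolfun_of)
  then show ?thesis unfolding equiv_bf_def by (meson rtranclp.rtrancl_into_rtrancl r_into_rtranclp)
qed

lemma two_flips_closer:
  assumes V: "finite V" and ab: "a \<in> even_valuations V" "b \<in> even_valuations V" "a \<noteq> b"
  obtains l\<^sub>1 l\<^sub>2 where "l\<^sub>1 \<in> V" "l\<^sub>2 \<in> V" "flip (flip a l\<^sub>1) l\<^sub>2 \<noteq> a"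
    "card (sym_diff (flip (flip a l\<^sub>1) l\<^sub>2) b) < card (sym_diff a b)"
proof -
  have sub: "a \<subseteq> V" "b \<subseteq> V" using ab by (auto simp: even_valuations_def)
  obtain l\<^sub>1 where l\<^sub>1: "l\<^sub>1 \<in> sym_diff a b" using \<open>a \<noteq> b\<close> by blast
  define w where "w = flip a l\<^sub>1"
  have "odd (card w)" using odd_card_flip[OF V ab(1)] l\<^sub>1 sub by (auto simp: w_def)
  then have "w \<noteq> b" using ab by (auto simp: even_valuations_def)
  then obtain l\<^sub>2 where l\<^sub>2: "l\<^sub>2 \<in> sym_diff w b" by blast
  have "l\<^sub>1 \<noteq> l\<^sub>2" using l\<^sub>1 l\<^sub>2 by (auto simp: w_def flip_def)
  have closer: "sym_diff (flip w l\<^sub>2) b = sym_diff a b - {l\<^sub>1, l\<^sub>2}"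
    using l\<^sub>1 l\<^sub>2 \<open>l\<^sub>1 \<noteq> l\<^sub>2\<close> by (auto simp: w_def flip_def)
  have "finite (sym_diff a b)" using sub V finite_subset by blast
  then have "card (sym_diff (flip w l\<^sub>2) b) < card (sym_diff a b)"
    unfolding closer using l\<^sub>1 by (intro psubset_card_mono) auto
  moreover have "flip w l\<^sub>2 \<noteq> a" using l\<^sub>1 \<open>l\<^sub>1 \<noteq> l\<^sub>2\<close> by (auto simp: w_def flip_def)
  moreover have "l\<^sub>1 \<in> V" "l\<^sub>2 \<in> V"
    using l\<^sub>1 l\<^sub>2 sub flip_subset[of a V l\<^sub>1] by (auto simp: w_def)
  ultimately show ?thesis using that unfolding w_def by blast
qed

lemma equiv_bf_replace:
  assumes V: "finite V" and S: "S \<subseteq> even_valuations V"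
    and a: "a \<in> S" and b: "b \<in> even_valuations V" "b \<notin> S"
  shows "equiv_bf V (boolfun_of S) (boolfun_of (insert b (S - {a})))"
  using S a b
proof (induction "card (sym_diff a b)" arbitrary: S a rule: less_induct)
  case less
  have "a \<noteq> b" using less by auto
  with V obtain l\<^sub>1 l\<^sub>2 where l: "l\<^sub>1 \<in> V" "l\<^sub>2 \<in> V"
    and "flip (flip a l\<^sub>1) l\<^sub>2 \<noteq> a"
    and "card (sym_diff (flip (flip a l\<^sub>1) l\<^sub>2) b) < card (sym_diff a b)"
    using two_flips_closer less.prems by (metis subsetD)
  moreover define c where "c = flip (flip a l\<^sub>1) l\<^sub>2"
  ultimately have "c \<noteq> a" and closer: "card (sym_diff c b) < card (sym_diff a b)"
    by simp_all
  have cE: "c \<in> even_valuations V"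
    using flip_flip_in_even_valuations[OF V _ l] less.prems by (auto simp: c_def)
  note replace_by_c = equiv_bf_replace_two_flips[OF V _ _ cE _ l c_def]
  consider "c = b" | "c \<noteq> b" "c \<in> S" | "c \<noteq> b" "c \<notin> S" by blast
  then show ?case
  proof cases
    case 1
    then show ?thesis using replace_by_c less.prems by simp
  next
    case 2
    \<comment> \<open>first move \<open>c\<close> out of the way to \<open>b\<close>, then \<open>a\<close> to the vacated \<open>c\<close>\<close>
    let ?S = "insert b (S - {c})"
    have "equiv_bf V (boolfun_of S) (boolfun_of ?S)"
      using less.hyps[OF closer] 2 less.prems by blast
    moreover have "equiv_bf V (boolfun_of ?S) (boolfun_of (insert c (?S - {a})))"
      by (rule replace_by_c) (use less.prems \<open>a \<noteq> b\<close> \<open>c \<noteq> a\<close> 2 in auto)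
    moreover have "insert c (?S - {a}) = insert b (S - {a})"
      using 2 \<open>c \<noteq> a\<close> \<open>a \<noteq> b\<close> by blast
    ultimately show ?thesis by (metis equiv_bf_trans)
  next
    case 3
    let ?S = "insert c (S - {a})"
    have "equiv_bf V (boolfun_of S) (boolfun_of ?S)"
      by (rule replace_by_c) (use less.prems 3 in auto)
    moreover have "equiv_bf V (boolfun_of ?S) (boolfun_of (insert b (?S - {c})))"
      by (rule less.hyps[OF closer]) (use less.prems cE \<open>c \<noteq> a\<close> 3 in auto)
    moreover have "insert b (?S - {c}) = insert b (S - {a})"
      using 3 \<open>c \<noteq> a\<close> less.prems by blast
    ultimately show ?thesis by (metis equiv_bf_trans)
  qed
qed

lemma equiv_bf_if_card_eq:
  assumes V: "finite V" and ST: "S \<subseteq> even_valuations V" "T \<subseteq> even_valuations V"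
    and card: "card S = card T"
  shows "equiv_bf V (boolfun_of S) (boolfun_of T)"
  using ST card
proof (induction "card (S - T)" arbitrary: S)
  case 0
  have fin: "finite S" "finite T" using 0 finite_even_valuations[OF V] finite_subset by auto
  with 0 have "S \<subseteq> T" by simp
  with fin 0 have "S = T" by (simp add: card_subset_eq)
  then show ?case by (simp add: equiv_bf_def)
next
  case (Suc n)
  have fin: "finite S" "finite T" using Suc.prems finite_even_valuations[OF V] finite_subset by auto
  have "S - T \<noteq> {}" using Suc.hyps(2) by force
  then obtain a where a: "a \<in> S - T" by blast
  have "\<not> T \<subseteq> S"
    using card_subset_eq[OF fin(1) _ Suc.prems(3)[symmetric]] a by blast
  then obtain b where b: "b \<in> T - S" by blast
  let ?S = "insert b (S - {a})"
  have "equiv_bf V (boolfun_of S) (boolfun_of ?S)"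
    by (rule equiv_bf_replace[OF V]) (use Suc.prems a b in auto)
  moreover have "equiv_bf V (boolfun_of ?S) (boolfun_of T)"
  proof (rule Suc.hyps(1))
    show "?S \<subseteq> even_valuations V" using Suc.prems b by blast
    show "T \<subseteq> even_valuations V" by (fact Suc.prems(2))
    have "?S - T = (S - T) - {a}" using b by blast
    then show "n = card (?S - T)" using Suc.hyps(2) a fin by simp
    have "card T > 0" using b fin(2) card_gt_0_iff by blast
    then show "card ?S = card T" using Suc.prems(3) a b fin by (simp add: card_insert_if)
  qed
  ultimately show ?case by (rule equiv_bf_trans)
qed

lemma exists_downward_closed_subset:
  fixes f :: "'a \<Rightarrow> 'b::linorder"
  assumes E: "finite E" and N: "N \<le> card E"
  shows "\<exists>T \<subseteq> E. card T = N \<and> (\<forall>x\<in>T. \<forall>y\<in>E. f y < f x \<longrightarrow> y \<in> T)"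
  using N
proof (induction N)
  case 0
  show ?case by (intro exI[of _ "{}"]) auto
next
  case (Suc N)
  then obtain T where T: "T \<subseteq> E" "card T = N" "\<forall>x\<in>T. \<forall>y\<in>E. f y < f x \<longrightarrow> y \<in> T"
    by auto
  have "E - T \<noteq> {}"
    using card_mono[OF finite_subset[OF T(1) E], of E] T(2) Suc.prems by auto
  then obtain y where y: "y \<in> E - T" "\<forall>z\<in>E - T. \<not> f z < f y"
    using ex_is_arg_min_if_finite[OF finite_Diff[OF E], of T f] unfolding is_arg_min_def by blast
  have "insert y T \<subseteq> E" using T(1) y(1) by blast
  moreover have "card (insert y T) = Suc N" using T(2) y(1) finite_subset[OF T(1) E] by simp
  moreover have "\<forall>x\<in>insert y T. \<forall>z\<in>E. f z < f x \<longrightarrow> z \<in> insert y T"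
    using T(3) y by blast
  ultimately show ?case by blast
qed

theorem lemma6p7:
  fixes k :: nat and \<phi> :: "nat set \<Rightarrow> bool"
  assumes "k \<ge> 1"
    and "boolfun_on {0..k} \<phi>"
    and "\<forall>\<nu>\<in>sat \<phi>. even (card \<nu>)"
  shows "\<exists>\<phi>c. boolfun_on {0..k} \<phi>c \<and> canonical {0..k} \<phi>c \<and> equiv_bf {0..k} \<phi>c \<phi>"
proof -
  let ?E = "even_valuations {0..k}"
  have finE: "finite ?E" by (simp add: finite_even_valuations)
  have satE: "sat \<phi> \<subseteq> ?E"
    using assms(2,3) by (auto simp: even_valuations_def boolfun_on_def sat_def)
  obtain T where T: "T \<subseteq> ?E" "card T = card (sat \<phi>)"
    and down: "\<forall>x\<in>T. \<forall>y\<in>?E. card y < card x \<longrightarrow> y \<in> T"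
    using exists_downward_closed_subset[OF finE card_mono[OF finE satE]] by blast
  have "equiv_bf {0..k} (boolfun_of T) (boolfun_of (sat \<phi>))"
    using equiv_bf_if_card_eq[OF _ T(1) satE T(2)] by simp
  moreover have "boolfun_on {0..k} (boolfun_of T)"
    using T(1) by (intro boolfun_on_boolfun_of) (auto simp: even_valuations_def)
  moreover have "canonical {0..k} (boolfun_of T)"
    using T(1) down unfolding canonical_def even_valuations_def by auto
  ultimately show ?thesis by (metis boolfun_of_sat)
qed

end
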